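(* Let $\mathcal A\in\mathbb R^{n_1}\otimes\cdots\otimes\mathbb R^{n_k}$, $1\le s\le k$ and $r\le\min\{n_1,\dots,n_s\}$. Consider problem (LRPOTA): minimize $\|\mathcal A-(U^{(1)},\dots,U^{(k)})\cdot\mathcal D\|^2$ over $\mathcal D=\operatorname{diag}_k(\lambda_1,\dots,\lambda_r)$, $\lambda_j\in\mathbb R$, $(U^{(i)})^{\mathsf T}U^{(i)}=I_r$ for $i=1,\dots,s$, $U^{(i)}\in\mathrm B(r,n_i)$ for $i=s+1,\dots,k$; and problem (mLRPOTA): maximize $\sum_{j=1}^r\big(((U^{(1)})^{\mathsf T},\dots,(U^{(k)})^{\mathsf T})\cdot\mathcal A\big)_{j\cdots j}^2$ subject to the same constraints on $U=(U^{(1)},\dots,U^{(k)})$. Then: (i) if $(\widehat U,\widehat{\mathcal D})$ with $\widehat{\mathcal D}=\operatorname{diag}_k(\widehat\lambda_1,\dots,\widehat\lambda_r)$ is an optimizer of (LRPOTA), then $\widehat U$ is an optimizer of (mLRPOTA), and the optimal values are respectively $\|\mathcal A\|^2-\sum_j\widehat\lambda_j^2$ and $\sum_j\widehat\lambda_j^2$; (ii) conversely, if $\widehat U$ is an optimizer of (mLRPOTA), then $(\widehat U,\widehat{\mathcal D})$ with $\widehat{\mathcal D}=\operatorname{diag}_k\circ\operatorname{Diag}_k\big(((\widehat U^{(1)})^{\mathsf T},\dots,(\widehat U^{(k)})^{\mathsf T})\cdot\mathcal A\big)$ is an optimizer of (LRPOTA).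
   Context: $\mathrm B(r,n)$ is the set of $n\times r$ real matrices with unit-norm columns. For matrices $B^{(i)}\in\mathbb R^{m_i\times n_i}$ and a tensor $\mathcal A$, $(B^{(1)},\dots,B^{(k)})\cdot\mathcal A$ is the tensor with entries $\sum_{j_1,\dots,j_k}b^{(1)}_{i_1j_1}\cdots b^{(k)}_{i_kj_k}a_{j_1\dots j_k}$. $\operatorname{diag}_k(\lambda)\in(\mathbb R^r)^{\otimes k}$ is the diagonal tensor with diagonal entries $\lambda_1,\dots,\lambda_r$, and $\operatorname{Diag}_k$ extracts the diagonal $(a_{i\cdots i})_{i=1}^r$ of a tensor in $(\mathbb R^r)^{\otimes k}$. The norm is the Hilbert–Schmidt (Frobenius) norm. *)

theory Defs
  imports Complex_Main
begin

text \<open>Order-k real tensors in R^{d_1} (x) ... (x) R^{d_k} are represented as functions on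
  multi-indices (nat \<Rightarrow> nat); the relevant multi-indices are those with I i < d i for i < k
  and I i = 0 for i \<ge> k (0-based indexing). Matrices are functions row \<Rightarrow> column \<Rightarrow> entry.\<close>

type_synonym tensor = "(nat \<Rightarrow> nat) \<Rightarrow> real"
type_synonym mat = "nat \<Rightarrow> nat \<Rightarrow> real"

definition idx :: "(nat \<Rightarrow> nat) \<Rightarrow> nat \<Rightarrow> (nat \<Rightarrow> nat) set" where
  "idx d k = {I. \<forall>i. (i < k \<longrightarrow> I i < d i) \<and> (k \<le> i \<longrightarrow> I i = 0)}"

definition hs_norm2 :: "(nat \<Rightarrow> nat) \<Rightarrow> nat \<Rightarrow> tensor \<Rightarrow> real" where
  "hs_norm2 d k A = (\<Sum>I\<in>idx d k. (A I)\<^sup>2)"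

definition mlmul :: "(nat \<Rightarrow> mat) \<Rightarrow> (nat \<Rightarrow> nat) \<Rightarrow> (nat \<Rightarrow> nat) \<Rightarrow> nat \<Rightarrow> tensor \<Rightarrow> tensor" where
  "mlmul B m d k A = (\<lambda>I. if I \<in> idx m k
      then (\<Sum>J\<in>idx d k. (\<Prod>i<k. B i (I i) (J i)) * A J) else 0)"

definition diag_idx :: "nat \<Rightarrow> nat \<Rightarrow> (nat \<Rightarrow> nat)" where
  "diag_idx k j = (\<lambda>i. if i < k then j else 0)"

definition diagT :: "nat \<Rightarrow> nat \<Rightarrow> (nat \<Rightarrow> real) \<Rightarrow> tensor" where
  "diagT r k lam = (\<lambda>J. if J \<in> idx (\<lambda>_. r) k \<and> J = diag_idx k (J 0) then lam (J 0) else 0)"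

definition DiagT :: "nat \<Rightarrow> tensor \<Rightarrow> (nat \<Rightarrow> real)" where
  "DiagT k T = (\<lambda>j. T (diag_idx k j))"

definition transpose_factors :: "(nat \<Rightarrow> mat) \<Rightarrow> (nat \<Rightarrow> mat)" where
  "transpose_factors U = (\<lambda>i a b. U i b a)"

definition orth_cols :: "nat \<Rightarrow> nat \<Rightarrow> mat \<Rightarrow> bool" where
  "orth_cols n r M = (\<forall>j<r. \<forall>j'<r. (\<Sum>a<n. M a j * M a j') = (if j = j' then 1 else 0))"

definition unit_cols :: "nat \<Rightarrow> nat \<Rightarrow> mat \<Rightarrow> bool" where
  "unit_cols n r M = (\<forall>j<r. (\<Sum>a<n. (M a j)\<^sup>2) = 1)"

text \<open>Feasible set of (LRPOTA)/(mLRPOTA); factor i (0-based) is n_i x r.\<close>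
definition feasible :: "(nat \<Rightarrow> nat) \<Rightarrow> nat \<Rightarrow> nat \<Rightarrow> nat \<Rightarrow> (nat \<Rightarrow> mat) \<Rightarrow> bool" where
  "feasible n k s r U = ((\<forall>i<s. orth_cols (n i) r (U i)) \<and> (\<forall>i. s \<le> i \<and> i < k \<longrightarrow> unit_cols (n i) r (U i)))"

definition lrpota_obj :: "tensor \<Rightarrow> (nat \<Rightarrow> nat) \<Rightarrow> nat \<Rightarrow> nat \<Rightarrow> (nat \<Rightarrow> mat) \<Rightarrow> (nat \<Rightarrow> real) \<Rightarrow> real" where
  "lrpota_obj A n k r U lam =
     hs_norm2 n k (\<lambda>I. A I - mlmul U n (\<lambda>_. r) k (diagT r k lam) I)"

definition mlrpota_obj :: "tensor \<Rightarrow> (nat \<Rightarrow> nat) \<Rightarrow> nat \<Rightarrow> nat \<Rightarrow> (nat \<Rightarrow> mat) \<Rightarrow> real" where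
  "mlrpota_obj A n k r U =
     (\<Sum>j<r. (mlmul (transpose_factors U) (\<lambda>_. r) n k A (diag_idx k j))\<^sup>2)"

definition lrpota_optimizer :: "tensor \<Rightarrow> (nat \<Rightarrow> nat) \<Rightarrow> nat \<Rightarrow> nat \<Rightarrow> nat \<Rightarrow> (nat \<Rightarrow> mat) \<Rightarrow> (nat \<Rightarrow> real) \<Rightarrow> bool" where
  "lrpota_optimizer A n k s r U lam =
     (feasible n k s r U \<and>
      (\<forall>U' lam'. feasible n k s r U' \<longrightarrow> lrpota_obj A n k r U lam \<le> lrpota_obj A n k r U' lam'))"

definition mlrpota_optimizer :: "tensor \<Rightarrow> (nat \<Rightarrow> nat) \<Rightarrow> nat \<Rightarrow> nat \<Rightarrow> nat \<Rightarrow> (nat \<Rightarrow> mat) \<Rightarrow> bool" where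
  "mlrpota_optimizer A n k s r U =
     (feasible n k s r U \<and>
      (\<forall>U'. feasible n k s r U' \<longrightarrow> mlrpota_obj A n k r U' \<le> mlrpota_obj A n k r U))"

end

theory Submission
  imports Defs
begin

(* For feasible U the rank-one tensors u_j = U^(1)_j (x) ... (x) U^(k)_j are orthonormal:
   every factor has unit columns, and the orthogonal first factor makes u_j and u_j' orthogonal
   for j ~= j'. The coefficients of A along them are a_j = ((U^(1))^T, ..., (U^(k))^T) . A at
   the diagonal position (j, ..., j), so Pythagoras gives
     ||A - sum_j lambda_j u_j||^2 = ||A||^2 - sum_j a_j^2 + sum_j (lambda_j - a_j)^2.
   Minimising over lambda forces lambda = a, and what remains is to maximise sum_j a_j^2. *)

lemma idx_0: "idx d 0 = {\<lambda>_. 0}"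
  unfolding idx_def by auto

lemma idx_Suc: "idx d (Suc k) = (\<lambda>(I, a). I(k := a)) ` (idx d k \<times> {..<d k})"
proof
  show "idx d (Suc k) \<subseteq> (\<lambda>(I, a). I(k := a)) ` (idx d k \<times> {..<d k})"
  proof
    fix J assume "J \<in> idx d (Suc k)"
    then have "(J(k := 0), J k) \<in> idx d k \<times> {..<d k}"
      unfolding idx_def by auto
    moreover have "J = (\<lambda>(I, a). I(k := a)) (J(k := 0), J k)" by simp
    ultimately show "J \<in> (\<lambda>(I, a). I(k := a)) ` (idx d k \<times> {..<d k})" by blast
  qed
qed (auto simp: idx_def)

lemma inj_on_idx_Suc: "inj_on (\<lambda>(I, a). I(k := a)) (idx d k \<times> {..<d k})"
proof (rule inj_onI, clarsimp)
  fix I a I' a'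
  assume "I \<in> idx d k" "I' \<in> idx d k" and upd: "I(k := a) = I'(k := a')"
  then have "I k = I' k" by (simp add: idx_def)
  then show "I = I' \<and> a = a'"
    using upd by (metis fun_upd_eqD fun_upd_triv fun_upd_upd)
qed

lemma finite_idx: "finite (idx d k)"
  by (induction k) (simp_all add: idx_0 idx_Suc)

lemma sum_idx_prod:
  "(\<Sum>I\<in>idx d k. \<Prod>i<k. f i (I i)) = (\<Prod>i<k. \<Sum>a<d i. f i a :: real)"
proof (induction k)
  case 0
  then show ?case by (simp add: idx_0)
next
  case (Suc k)
  have "(\<Sum>I\<in>idx d (Suc k). \<Prod>i<Suc k. f i (I i))
      = (\<Sum>(I, a)\<in>idx d k \<times> {..<d k}. \<Prod>i<Suc k. f i ((I(k := a)) i))"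
    unfolding idx_Suc sum.reindex[OF inj_on_idx_Suc] by (rule sum.cong) auto
  also have "\<dots> = (\<Sum>(I, a)\<in>idx d k \<times> {..<d k}. (\<Prod>i<k. f i (I i)) * f k a)"
    by (rule sum.cong) (auto intro!: prod.cong)
  also have "\<dots> = (\<Sum>I\<in>idx d k. \<Prod>i<k. f i (I i)) * (\<Sum>a<d k. f k a)"
    by (simp add: sum.cartesian_product[symmetric] sum_product)
  finally show ?case
    using Suc by simp
qed

lemma sum_square_residual_orthonormal:
  fixes x :: "'a \<Rightarrow> real" and e :: "nat \<Rightarrow> 'a \<Rightarrow> real"
  assumes orthonormal: "\<And>j j'. j < r \<Longrightarrow> j' < r \<Longrightarrow>
      (\<Sum>t\<in>X. e j t * e j' t) = (if j = j' then 1 else 0)"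
  defines "c j \<equiv> \<Sum>t\<in>X. x t * e j t"
  shows "(\<Sum>t\<in>X. (x t - (\<Sum>j<r. lam j * e j t))\<^sup>2)
       = (\<Sum>t\<in>X. (x t)\<^sup>2) - (\<Sum>j<r. (c j)\<^sup>2) + (\<Sum>j<r. (lam j - c j)\<^sup>2)"
proof -
  define y where "y t = (\<Sum>j<r. lam j * e j t)" for t
  have cross: "(\<Sum>t\<in>X. x t * y t) = (\<Sum>j<r. lam j * c j)"
    unfolding y_def c_def
    by (simp add: sum_distrib_left sum_distrib_right sum.swap[of _ X] mult_ac)
  have "(\<Sum>t\<in>X. (y t)\<^sup>2) = (\<Sum>j<r. \<Sum>j'<r. lam j * lam j' * (\<Sum>t\<in>X. e j t * e j' t))"
    unfolding y_def power2_eq_square sum_product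
    by (simp add: sum_distrib_left sum.swap[of _ X] mult_ac)
  also have "\<dots> = (\<Sum>j<r. \<Sum>j'<r. lam j * lam j' * (if j = j' then 1 else 0))"
    by (intro sum.cong refl) (simp add: orthonormal)
  also have "\<dots> = (\<Sum>j<r. (lam j)\<^sup>2)"
    by (simp add: power2_eq_square if_distrib cong: if_cong)
  finally have square: "(\<Sum>t\<in>X. (y t)\<^sup>2) = (\<Sum>j<r. (lam j)\<^sup>2)" .
  have "(\<Sum>t\<in>X. (x t - y t)\<^sup>2)
      = (\<Sum>t\<in>X. (x t)\<^sup>2) - 2 * (\<Sum>t\<in>X. x t * y t) + (\<Sum>t\<in>X. (y t)\<^sup>2)"
    by (simp add: power2_diff sum.distrib sum_subtractf sum_distrib_left mult.assoc)
  moreover have "(\<Sum>j<r. (lam j - c j)\<^sup>2)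
      = (\<Sum>j<r. (lam j)\<^sup>2) - 2 * (\<Sum>j<r. lam j * c j) + (\<Sum>j<r. (c j)\<^sup>2)"
    by (simp add: power2_diff sum.distrib sum_subtractf sum_distrib_left mult.assoc)
  ultimately show ?thesis
    unfolding y_def[symmetric] cross square by simp
qed

definition rank_one :: "(nat \<Rightarrow> mat) \<Rightarrow> nat \<Rightarrow> nat \<Rightarrow> tensor" where
  "rank_one U k j = (\<lambda>I. \<Prod>i<k. U i (I i) j)"

lemma diag_idx_in_idx: "j < r \<Longrightarrow> diag_idx k j \<in> idx (\<lambda>_. r) k"
  unfolding idx_def diag_idx_def by auto

lemma DiagT_mlmul_transpose:
  assumes "j < r"
  shows "DiagT k (mlmul (transpose_factors U) (\<lambda>_. r) n k A) j
       = (\<Sum>I\<in>idx n k. A I * rank_one U k j I)"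
  using diag_idx_in_idx[OF assms]
  by (auto simp: DiagT_def mlmul_def transpose_factors_def rank_one_def diag_idx_def mult.commute
           intro!: sum.cong prod.cong)

lemma mlmul_diagT:
  assumes "1 \<le> k" and "I \<in> idx n k"
  shows "mlmul U n (\<lambda>_. r) k (diagT r k lam) I = (\<Sum>j<r. lam j * rank_one U k j I)"
proof -
  let ?g = "\<lambda>J. (\<Prod>i<k. U i (I i) (J i)) * diagT r k lam J"
  have diag_idx_0: "diag_idx k j 0 = j" for j
    using assms(1) by (simp add: diag_idx_def)
  have inj: "inj_on (diag_idx k) {..<r}"
    by (rule inj_onI) (metis diag_idx_0)
  have off_diagonal: "?g J = 0" if "J \<in> idx (\<lambda>_. r) k - diag_idx k ` {..<r}" for J
  proof -
    have "J 0 < r" using that assms(1) by (auto simp: idx_def)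
    then have "diagT r k lam J = 0" using that by (auto simp: diagT_def)
    then show ?thesis by simp
  qed
  have "(\<Sum>J\<in>idx (\<lambda>_. r) k. ?g J) = (\<Sum>J\<in>diag_idx k ` {..<r}. ?g J)"
    by (rule sum.mono_neutral_right[OF finite_idx]) (auto simp: diag_idx_in_idx off_diagonal)
  also have "\<dots> = (\<Sum>j<r. ?g (diag_idx k j))"
    by (simp add: sum.reindex[OF inj])
  also have "\<dots> = (\<Sum>j<r. lam j * rank_one U k j I)"
    using diag_idx_in_idx diag_idx_0
    by (auto simp: diagT_def rank_one_def diag_idx_def intro!: sum.cong prod.cong)
  finally show ?thesis
    using assms(2) by (simp add: mlmul_def)
qed

(* Only the first factor needs orthogonal columns (hence s \<ge> 1); the others are just unit. *)
lemma rank_one_orthonormal: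
  assumes "1 \<le> s" "s \<le> k" "feasible n k s r U" "j < r" "j' < r"
  shows "(\<Sum>I\<in>idx n k. rank_one U k j I * rank_one U k j' I) = (if j = j' then 1 else 0)"
proof -
  have columns: "(\<Sum>a<n i. U i a j * U i a j') = (if j = j' then 1 else 0)"
    if "i < k" "i = 0 \<or> j = j'" for i
  proof (cases "i < s")
    case True
    then show ?thesis
      using assms(3-5) by (auto simp: feasible_def orth_cols_def)
  next
    case False
    then show ?thesis
      using assms(1,3,4) that by (auto simp: feasible_def unit_cols_def power2_eq_square)
  qed
  have "(\<Sum>I\<in>idx n k. rank_one U k j I * rank_one U k j' I)
      = (\<Prod>i<k. \<Sum>a<n i. U i a j * U i a j')"
    unfolding rank_one_def prod.distrib[symmetric] by (rule sum_idx_prod)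
  also have "\<dots> = (if j = j' then 1 else 0)"
  proof (cases "j = j'")
    case True
    then have "(\<Sum>a<n i. U i a j * U i a j') = 1" if "i < k" for i
      using columns[OF that] by simp
    with True show ?thesis by (simp add: prod.neutral)
  next
    case False
    have "0 \<in> {..<k}" using assms(1,2) by simp
    then show ?thesis
      using False columns[of 0] by (simp add: prod.remove)
  qed
  finally show ?thesis .
qed

lemma lrpota_obj_eq:
  assumes "1 \<le> s" "s \<le> k" "feasible n k s r U"
  shows "lrpota_obj A n k r U lam = hs_norm2 n k A - mlrpota_obj A n k r U
       + (\<Sum>j<r. (lam j - DiagT k (mlmul (transpose_factors U) (\<lambda>_. r) n k A) j)\<^sup>2)"
proof -
  have "lrpota_obj A n k r U lam
      = (\<Sum>I\<in>idx n k. (A I - (\<Sum>j<r. lam j * rank_one U k j I))\<^sup>2)"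
    using assms(1,2) by (simp add: lrpota_obj_def hs_norm2_def mlmul_diagT)
  also have "\<dots> = hs_norm2 n k A - (\<Sum>j<r. (\<Sum>I\<in>idx n k. A I * rank_one U k j I)\<^sup>2)
      + (\<Sum>j<r. (lam j - (\<Sum>I\<in>idx n k. A I * rank_one U k j I))\<^sup>2)"
    unfolding hs_norm2_def
    by (rule sum_square_residual_orthonormal) (rule rank_one_orthonormal[OF assms])
  also have "\<dots> = hs_norm2 n k A - mlrpota_obj A n k r U
      + (\<Sum>j<r. (lam j - DiagT k (mlmul (transpose_factors U) (\<lambda>_. r) n k A) j)\<^sup>2)"
    unfolding mlrpota_obj_def
    by (auto simp: DiagT_mlmul_transpose[symmetric] DiagT_def intro!: sum.cong arg_cong2[where f = "(+)"])
  finally show ?thesis .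
qed

lemma lrpota_optimizerD:
  assumes "1 \<le> s" "s \<le> k" and opt: "lrpota_optimizer A n k s r U lam"
  shows "mlrpota_optimizer A n k s r U"
    and "lrpota_obj A n k r U lam = hs_norm2 n k A - (\<Sum>j<r. (lam j)\<^sup>2)"
    and "mlrpota_obj A n k r U = (\<Sum>j<r. (lam j)\<^sup>2)"
proof -
  let ?a = "\<lambda>U. DiagT k (mlmul (transpose_factors U) (\<lambda>_. r) n k A)"
  have feas: "feasible n k s r U"
    using opt by (simp add: lrpota_optimizer_def)
  note obj = lrpota_obj_eq[OF assms(1,2), where A = A]
  have "lrpota_obj A n k r U lam \<le> lrpota_obj A n k r U (?a U)"
    using opt feas by (simp add: lrpota_optimizer_def)
  then have "(\<Sum>j<r. (lam j - ?a U j)\<^sup>2) \<le> 0"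
    using obj[OF feas] by simp
  then have lam_eq: "\<forall>j<r. lam j = ?a U j"
    using sum_nonneg_eq_0_iff[of "{..<r}" "\<lambda>j. (lam j - ?a U j)\<^sup>2"]
    by (simp add: order_antisym sum_nonneg)
  then show mlrpota_value: "mlrpota_obj A n k r U = (\<Sum>j<r. (lam j)\<^sup>2)"
    by (simp add: mlrpota_obj_def DiagT_def)
  with lam_eq show lrpota_value: "lrpota_obj A n k r U lam = hs_norm2 n k A - (\<Sum>j<r. (lam j)\<^sup>2)"
    using obj[OF feas] by simp
  have "mlrpota_obj A n k r U' \<le> mlrpota_obj A n k r U" if "feasible n k s r U'" for U'
  proof -
    have "lrpota_obj A n k r U lam \<le> lrpota_obj A n k r U' (?a U')"
      using opt that by (simp add: lrpota_optimizer_def)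
    then show ?thesis
      using lrpota_value mlrpota_value obj[OF that] by simp
  qed
  with feas show "mlrpota_optimizer A n k s r U"
    by (simp add: mlrpota_optimizer_def)
qed

lemma mlrpota_optimizer_imp_lrpota_optimizer:
  assumes "1 \<le> s" "s \<le> k" and opt: "mlrpota_optimizer A n k s r U"
  shows "lrpota_optimizer A n k s r U (DiagT k (mlmul (transpose_factors U) (\<lambda>_. r) n k A))"
proof -
  have feas: "feasible n k s r U"
    using opt by (simp add: mlrpota_optimizer_def)
  note obj = lrpota_obj_eq[OF assms(1,2), where A = A]
  have "lrpota_obj A n k r U (DiagT k (mlmul (transpose_factors U) (\<lambda>_. r) n k A))
      \<le> lrpota_obj A n k r U' lam'" if "feasible n k s r U'" for U' lam'
  proof -
    have "mlrpota_obj A n k r U' \<le> mlrpota_obj A n k r U"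
      using opt that by (simp add: mlrpota_optimizer_def)
    moreover have "0 \<le> (\<Sum>j<r. (lam' j - DiagT k (mlmul (transpose_factors U') (\<lambda>_. r) n k A) j)\<^sup>2)"
      by (simp add: sum_nonneg)
    ultimately show ?thesis
      using obj[OF feas] obj[OF that] by simp
  qed
  with feas show ?thesis
    by (simp add: lrpota_optimizer_def)
qed

(* The hypothesis r \<le> n i only makes the feasible set nonempty; the argument does not use it. *)
theorem proposition3p5:
  fixes A :: tensor and n :: "nat \<Rightarrow> nat" and k s r :: nat
  assumes "1 \<le> s" and "s \<le> k" and "\<forall>i<s. r \<le> n i"
  shows "(\<forall>U lam. lrpota_optimizer A n k s r U lam \<longrightarrow>
            mlrpota_optimizer A n k s r U \<and>
            lrpota_obj A n k r U lam = hs_norm2 n k A - (\<Sum>j<r. (lam j)\<^sup>2) \<and>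
            mlrpota_obj A n k r U = (\<Sum>j<r. (lam j)\<^sup>2))
       \<and> (\<forall>U. mlrpota_optimizer A n k s r U \<longrightarrow>
            lrpota_optimizer A n k s r U
              (DiagT k (mlmul (transpose_factors U) (\<lambda>_. r) n k A)))"
  using lrpota_optimizerD[OF assms(1,2)] mlrpota_optimizer_imp_lrpota_optimizer[OF assms(1,2)]
  by blast

end
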